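(* For all integers $n,k\ge0$, the integer $|v(n,k)|$, where $v(n,k)=4^{n-k}t(2n+1,2k+1)$, is the number of $(n,k)$-Riordan complexes.
   Context: $t(m,k)$ are the central factorial numbers of the first kind. Equivalently, $|v(n,k)|$ is the coefficient of $t^{2k+1}$ in $t(t^2+1^2)(t^2+3^2)\cdots(t^2+(2n-1)^2)$ (the empty product for $n=0$ giving $t$); also $v(0,0)=1$, $v(0,k)=0$ for $k\ge1$, $v(n,-1)=0$, and $v(n,k)=v(n-1,k-1)-(2n-1)^2v(n-1,k)$ for $n\ge1$. An $(n,k)$-Riordan complex is a $(2k+1)$-tuple $((B_1,\sigma_1,\tau_1),\dots,(B_{2k+1},\sigma_{2k+1},\tau_{2k+1}))$ such that (i) $\{B_1,\dots,B_{2k+1}\}$ is a partition of $\{1,\dots,2n+1\}$ into blocks of odd cardinality, and (ii) for each $i$, $\sigma_i$ and $\tau_i$ are fixed-point-free involutions of $B_i\setminus\{\max(B_i)\}$. *)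

theory Defs
  imports "HOL-Computational_Algebra.Polynomial" "HOL-Library.Disjoint_Sets"
begin

text \<open>Central factorial numbers of the first kind: t(m,k) is the coefficient of x^k in
  x^{[m]} = x (x + m/2 - 1) (x + m/2 - 2) ... (x - m/2 + 1)  (m factors), with x^{[0]} = 1.\<close>
definition central_fact_poly :: "nat \<Rightarrow> rat poly" where
  "central_fact_poly m =
     (if m = 0 then 1
      else [:0, 1:] * (\<Prod>i\<in>{1..m-1}. [: of_nat m / 2 - of_nat i, 1 :]))"

definition cfact1 :: "nat \<Rightarrow> nat \<Rightarrow> rat" where
  "cfact1 m k = coeff (central_fact_poly m) k"

text \<open>v(n,k) = 4^(n-k) t(2n+1, 2k+1) (for k > n, t(2n+1,2k+1) = 0, so the exponent convention is irrelevant).\<close>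
definition vnum :: "nat \<Rightarrow> nat \<Rightarrow> rat" where
  "vnum n k = 4 ^ (n - k) * cfact1 (2*n+1) (2*k+1)"

text \<open>Fixed-point-free involution of a set S; as a total function we require it to be the
  identity outside S (so that it is determined by its restriction to S).\<close>
definition fpf_involution_on :: "nat set \<Rightarrow> (nat \<Rightarrow> nat) \<Rightarrow> bool" where
  "fpf_involution_on S \<sigma> \<longleftrightarrow>
     (\<forall>x\<in>S. \<sigma> x \<in> S \<and> \<sigma> x \<noteq> x \<and> \<sigma> (\<sigma> x) = x) \<and> (\<forall>x. x \<notin> S \<longrightarrow> \<sigma> x = x)"

text \<open>An (n,k)-Riordan complex, taken up to reordering of its 2k+1 components, i.e. as the
  set of its triples (B_i, sigma_i, tau_i); the blocks B_i are pairwise distinct.\<close>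
definition riordan_complex :: "nat \<Rightarrow> nat \<Rightarrow> (nat set \<times> (nat \<Rightarrow> nat) \<times> (nat \<Rightarrow> nat)) set \<Rightarrow> bool" where
  "riordan_complex n k R \<longleftrightarrow>
     finite R \<and> card R = 2*k+1 \<and> inj_on fst R \<and>
     partition_on {1..2*n+1} (fst ` R) \<and>
     (\<forall>(B,\<sigma>,\<tau>)\<in>R. odd (card B) \<and>
        fpf_involution_on (B - {Max B}) \<sigma> \<and> fpf_involution_on (B - {Max B}) \<tau>)"

end

theory Submission
  imports Defs "HOL-Computational_Algebra.Formal_Power_Series"
begin

text \<open>Let c N be the polynomial whose coefficient of x^j counts the complexes with j components on
  an N-element ground set. Removing the component that contains the largest point gives
  c (N+1) = x \<Sum>r. (N choose r) m(r)^2 c (N-r), where m(r) counts the fixed-point-free involutions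
  of an r-set. For exponential generating functions this reads F' = x G F with G = 1/sqrt(1-t^2),
  whence (1-t^2) F'' = t F' + x^2 F, i.e. c (N+2) = (x^2 + N^2) c N. So c (2n+1) is
  x \<Prod>j<n. (x^2 + (2j+1)^2), which turns into the central factorial polynomial x^[2n+1]
  under the substitution x \<mapsto> 2ix.\<close>

unbundle fps_syntax

definition fpf_involutions :: "nat set \<Rightarrow> (nat \<Rightarrow> nat) set" where
  "fpf_involutions T = {\<sigma>. fpf_involution_on T \<sigma>}"

fun matchings :: "nat \<Rightarrow> nat" where
  "matchings 0 = 1"
| "matchings (Suc 0) = 0"
| "matchings (Suc (Suc m)) = Suc m * matchings m"

lemma matchings_Suc: "matchings (Suc m) = m * matchings (m - 1)"
  by (cases m) simp_all

lemma matchings_odd: "matchings (Suc (2 * m)) = 0"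
  by (induction m) (simp_all add: numeral_2_eq_2)

definition pair_up :: "nat \<Rightarrow> nat \<Rightarrow> (nat \<Rightarrow> nat) \<Rightarrow> nat \<Rightarrow> nat" where
  "pair_up x p \<rho> = \<rho>(x := p, p := x)"

lemma fpf_involutions_empty: "fpf_involutions {} = {id}"
  by (auto simp: fpf_involutions_def fpf_involution_on_def)

lemma fpf_involutions_pair_up_decomp:
  assumes "x \<in> T"
  shows "fpf_involutions T = (\<Union>p\<in>T - {x}. pair_up x p ` fpf_involutions (T - {x, p}))"
proof (intro equalityI subsetI)
  fix \<sigma> assume \<sigma>: "\<sigma> \<in> fpf_involutions T"
  let ?p = "\<sigma> x"
  have p: "?p \<in> T - {x}"
    using \<sigma> assms by (auto simp: fpf_involutions_def fpf_involution_on_def)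
  have "\<sigma>(x := x, ?p := ?p) \<in> fpf_involutions (T - {x, ?p})"
    using \<sigma> assms unfolding fpf_involutions_def fpf_involution_on_def by (auto, metis+)
  moreover have "\<sigma> = pair_up x ?p (\<sigma>(x := x, ?p := ?p))"
    using \<sigma> assms p unfolding pair_up_def fpf_involutions_def fpf_involution_on_def
    by (auto simp: fun_eq_iff)
  ultimately show "\<sigma> \<in> (\<Union>p\<in>T - {x}. pair_up x p ` fpf_involutions (T - {x, p}))"
    using p by blast
next
  fix \<sigma> assume "\<sigma> \<in> (\<Union>p\<in>T - {x}. pair_up x p ` fpf_involutions (T - {x, p}))"
  then obtain p \<rho> where "p \<in> T - {x}" "\<rho> \<in> fpf_involutions (T - {x, p})" "\<sigma> = pair_up x p \<rho>"
    by blast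
  then show "\<sigma> \<in> fpf_involutions T"
    using assms unfolding pair_up_def fpf_involutions_def fpf_involution_on_def by auto
qed

lemma inj_on_pair_up: "inj_on (pair_up x p) (fpf_involutions (T - {x, p}))"
proof (rule inj_onI)
  fix a b assume a: "a \<in> fpf_involutions (T - {x, p})" and b: "b \<in> fpf_involutions (T - {x, p})"
    and ab: "pair_up x p a = pair_up x p b"
  have "a z = b z" for z
  proof (cases "z \<in> {x, p}")
    case True
    then show ?thesis
      using a b by (auto simp: fpf_involutions_def fpf_involution_on_def)
  next
    case False
    then show ?thesis
      using fun_cong[OF ab, of z] by (simp add: pair_up_def)
  qed
  then show "a = b" ..
qed

lemma pair_up_images_disjoint:
  assumes "p \<noteq> x" "q \<noteq> p"
  shows "pair_up x p ` A \<inter> pair_up x q ` B = {}"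
proof -
  have "pair_up x p a x \<noteq> pair_up x q b x" for a b
    using assms by (simp add: pair_up_def)
  then show ?thesis
    by (blast dest: fun_cong[where x = x])
qed

lemma finite_card_fpf_involutions:
  assumes "finite T"
  shows "finite (fpf_involutions T) \<and> card (fpf_involutions T) = matchings (card T)"
  using assms
proof (induction "card T" arbitrary: T rule: less_induct)
  case less
  show ?case
  proof (cases "T = {}")
    case True
    then show ?thesis by (simp add: fpf_involutions_empty)
  next
    case False
    then obtain x where x: "x \<in> T" by blast
    define m where "m = card (T - {x})"
    have card_T: "card T = Suc m"
      using card_Suc_Diff1[OF less.prems x] by (simp add: m_def)
    have IH: "finite (fpf_involutions (T - {x, p})) \<and>
        card (fpf_involutions (T - {x, p})) = matchings (m - 1)" if "p \<in> T - {x}" for p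
    proof -
      have "T - {x, p} = T - {x} - {p}"
        by auto
      then have "card (T - {x, p}) = m - 1"
        using that less.prems by (simp add: m_def)
      then show ?thesis
        using less.hyps[of "T - {x, p}"] less.prems card_T by simp
    qed
    note decomp = fpf_involutions_pair_up_decomp[OF x]
    have "card (fpf_involutions T) = (\<Sum>p\<in>T - {x}. card (pair_up x p ` fpf_involutions (T - {x, p})))"
      unfolding decomp by (rule card_UN_disjoint) (use less.prems IH pair_up_images_disjoint in blast)+
    also have "\<dots> = (\<Sum>p\<in>T - {x}. matchings (m - 1))"
      by (rule sum.cong) (auto simp: card_image inj_on_pair_up IH)
    also have "\<dots> = matchings (card T)"
      by (simp add: card_T matchings_Suc m_def)
    finally show ?thesis
      unfolding decomp using less.prems IH by auto
  qed
qed

lemma finite_fpf_involutions: "finite T \<Longrightarrow> finite (fpf_involutions T)"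
  using finite_card_fpf_involutions by blast

lemma card_fpf_involutions: "finite T \<Longrightarrow> card (fpf_involutions T) = matchings (card T)"
  using finite_card_fpf_involutions by blast

lemma fpf_involution_on_even_card:
  assumes "finite T" "fpf_involution_on T \<sigma>"
  shows "even (card T)"
proof (rule ccontr)
  assume "odd (card T)"
  then have "card (fpf_involutions T) = 0"
    using card_fpf_involutions[OF assms(1)] matchings_odd by (auto elim!: oddE)
  then show False
    using assms finite_fpf_involutions by (auto simp: fpf_involutions_def)
qed

type_synonym labelled_block = "nat set \<times> (nat \<Rightarrow> nat) \<times> (nat \<Rightarrow> nat)"

definition riordan_complex_on :: "nat set \<Rightarrow> nat \<Rightarrow> labelled_block set \<Rightarrow> bool" where
  "riordan_complex_on S j R \<longleftrightarrow>
     finite R \<and> card R = j \<and> inj_on fst R \<and> partition_on S (fst ` R) \<and>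
     (\<forall>(B, \<sigma>, \<tau>)\<in>R. odd (card B) \<and>
        fpf_involution_on (B - {Max B}) \<sigma> \<and> fpf_involution_on (B - {Max B}) \<tau>)"

lemma riordan_complex_eq_on: "riordan_complex n k = riordan_complex_on {1..2*n+1} (2*k+1)"
  by (simp add: fun_eq_iff riordan_complex_def riordan_complex_on_def)

lemma riordan_complex_on_block_subset:
  "riordan_complex_on S j R \<Longrightarrow> (B, \<sigma>, \<tau>) \<in> R \<Longrightarrow> B \<subseteq> S"
  unfolding riordan_complex_on_def partition_on_def by force

lemma riordan_complex_on_blockD:
  assumes "riordan_complex_on S j R" "(B, \<sigma>, \<tau>) \<in> R"
  shows "odd (card B)" "\<sigma> \<in> fpf_involutions (B - {Max B})" "\<tau> \<in> fpf_involutions (B - {Max B})"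
  using assms unfolding riordan_complex_on_def fpf_involutions_def by auto

lemma finite_riordan_complexes_on:
  assumes "finite S"
  shows "finite {R. riordan_complex_on S j R}"
proof (rule finite_subset)
  let ?F = "\<Union>T\<in>Pow S. fpf_involutions T"
  have "R \<subseteq> Pow S \<times> ?F \<times> ?F" if R: "riordan_complex_on S j R" for R
  proof
    fix t assume t: "t \<in> R"
    obtain B \<sigma> \<tau> where t_eq: "t = (B, \<sigma>, \<tau>)"
      by (cases t)
    have "B \<subseteq> S" "\<sigma> \<in> fpf_involutions (B - {Max B})" "\<tau> \<in> fpf_involutions (B - {Max B})"
      using R t unfolding t_eq by (auto dest: riordan_complex_on_block_subset riordan_complex_on_blockD)
    then show "t \<in> Pow S \<times> ?F \<times> ?F"
      unfolding t_eq by blast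
  qed
  then show "{R. riordan_complex_on S j R} \<subseteq> Pow (Pow S \<times> ?F \<times> ?F)"
    by blast
  have "finite ?F"
    using assms by (intro finite_UN_I) (auto intro: finite_fpf_involutions rev_finite_subset)
  then show "finite (Pow (Pow S \<times> ?F \<times> ?F))"
    using assms by simp
qed

lemma riordan_complexes_on_empty: "{R. riordan_complex_on {} j R} = (if j = 0 then {{}} else {})"
  by (auto simp: riordan_complex_on_def partition_on_empty)

lemma riordan_complexes_on_0: "S \<noteq> {} \<Longrightarrow> {R. riordan_complex_on S 0 R} = {}"
  by (auto simp: riordan_complex_on_def partition_on_def)

lemma riordan_complex_on_remove_block:
  assumes R: "riordan_complex_on S (Suc j) R" and t: "(B, \<sigma>, \<tau>) \<in> R"
  shows "riordan_complex_on (S - B) j (R - {(B, \<sigma>, \<tau>)})"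
proof -
  let ?R' = "R - {(B, \<sigma>, \<tau>)}"
  have inj: "inj_on fst R" and part: "partition_on S (fst ` R)"
    using R by (simp_all add: riordan_complex_on_def)
  have img: "fst ` ?R' = fst ` R - {B}"
    using inj_on_image_set_diff[OF inj, of R "{(B, \<sigma>, \<tau>)}"] t by auto
  have B: "B \<in> fst ` R"
    using t by force
  have disj: "disjnt B (\<Union>(fst ` R - {B}))"
    using partition_onD2[OF part] B by (auto simp: disjnt_def dest: disjointD)
  have "partition_on S (insert B (fst ` R - {B}))"
    using part B by (simp add: insert_absorb)
  then have "partition_on (S - B) (fst ` ?R')"
    unfolding img using partition_on_insert[OF disj] by blast
  moreover have "finite ?R'" "card ?R' = j" "inj_on fst ?R'"
    using R t inj by (auto simp: riordan_complex_on_def intro: inj_on_subset)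
  ultimately show ?thesis
    using R unfolding riordan_complex_on_def by auto
qed

lemma riordan_complex_on_insert_block:
  assumes R: "riordan_complex_on (S - B) j R" and "B \<subseteq> S" "odd (card B)"
    and "\<sigma> \<in> fpf_involutions (B - {Max B})" "\<tau> \<in> fpf_involutions (B - {Max B})"
  shows "riordan_complex_on S (Suc j) (insert (B, \<sigma>, \<tau>) R)"
proof -
  have "B \<noteq> {}"
    using \<open>odd (card B)\<close> by auto
  have notin: "B \<notin> fst ` R"
    using R \<open>B \<noteq> {}\<close> by (fastforce dest: riordan_complex_on_block_subset)
  have part: "partition_on (S - B) (fst ` R)"
    using R by (simp add: riordan_complex_on_def)
  then have "disjnt B (\<Union>(fst ` R))"
    by (auto simp: disjnt_def dest: partition_onD1)
  then have "partition_on S (fst ` insert (B, \<sigma>, \<tau>) R)"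
    using part assms(2) \<open>B \<noteq> {}\<close> partition_on_insert by (metis Diff_partition image_insert fst_conv)
  moreover have "card (insert (B, \<sigma>, \<tau>) R) = Suc (card R)"
  proof (rule card_insert_disjoint)
    show "finite R"
      using R by (simp add: riordan_complex_on_def)
    show "(B, \<sigma>, \<tau>) \<notin> R"
      using notin by force
  qed
  moreover have "finite (insert (B, \<sigma>, \<tau>) R)" "card R = j"
    using R by (simp_all add: riordan_complex_on_def)
  moreover have "inj_on fst (insert (B, \<sigma>, \<tau>) R)"
    using R notin by (auto simp: riordan_complex_on_def)
  ultimately show ?thesis
    using R assms(3-5) unfolding riordan_complex_on_def fpf_involutions_def by auto
qed

definition add_component ::
    "nat \<Rightarrow> nat set \<times> (nat \<Rightarrow> nat) \<times> (nat \<Rightarrow> nat) \<times> labelled_block set \<Rightarrow> labelled_block set"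
  where
  "add_component M = (\<lambda>(T, \<sigma>, \<tau>, R). insert (insert M T, \<sigma>, \<tau>) R)"

lemma riordan_complex_on_add_component:
  assumes "finite S" "M = Max S" "S \<noteq> {}" "T \<subseteq> S - {M}"
    and \<sigma>: "\<sigma> \<in> fpf_involutions T" and \<tau>: "\<tau> \<in> fpf_involutions T"
    and R: "riordan_complex_on (S - insert M T) j R"
  shows "riordan_complex_on S (Suc j) (add_component M (T, \<sigma>, \<tau>, R))"
proof -
  have "finite T" "M \<notin> T" "insert M T \<subseteq> S"
    using assms(1-4) by (auto intro: finite_subset)
  have Max_eq: "Max (insert M T) = M"
    using assms(1-4) \<open>finite T\<close> by (auto intro!: Max_eqI)
  have "odd (card (insert M T))"
    using fpf_involution_on_even_card[OF \<open>finite T\<close>] \<sigma> \<open>finite T\<close> \<open>M \<notin> T\<close>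
    by (simp add: fpf_involutions_def)
  then show ?thesis
    using riordan_complex_on_insert_block[OF R \<open>insert M T \<subseteq> S\<close>] \<sigma> \<tau> Max_eq \<open>M \<notin> T\<close>
    by (simp add: add_component_def)
qed

lemma riordan_complexes_on_Suc:
  assumes "finite S" "M = Max S" "S \<noteq> {}"
  shows "{R. riordan_complex_on S (Suc j) R} = add_component M `
    (SIGMA T:Pow (S - {M}).
       fpf_involutions T \<times> fpf_involutions T \<times> {R. riordan_complex_on (S - insert M T) j R})"
    (is "?lhs = add_component M ` ?D")
proof
  show "?lhs \<subseteq> add_component M ` ?D"
  proof
    fix R assume "R \<in> ?lhs"
    then have R: "riordan_complex_on S (Suc j) R" by simp
    have "M \<in> S"
      using assms by simp
    then obtain B \<sigma> \<tau> where t: "(B, \<sigma>, \<tau>) \<in> R" and "M \<in> B"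
      using R unfolding riordan_complex_on_def partition_on_def by force
    have BS: "B \<subseteq> S"
      using R t by (rule riordan_complex_on_block_subset)
    then have "Max B = M"
      using assms \<open>M \<in> B\<close> by (metis Max_eqI Max_ge finite_subset subsetD)
    define T where "T = B - {M}"
    have B_eq: "B = insert M T"
      using \<open>M \<in> B\<close> by (auto simp: T_def)
    have "\<sigma> \<in> fpf_involutions T" "\<tau> \<in> fpf_involutions T"
      using riordan_complex_on_blockD[OF R t] \<open>Max B = M\<close> by (simp_all add: T_def)
    moreover have "riordan_complex_on (S - insert M T) j (R - {(B, \<sigma>, \<tau>)})"
      using riordan_complex_on_remove_block[OF R t] B_eq by simp
    moreover have "T \<in> Pow (S - {M})"
      using BS by (auto simp: T_def)
    ultimately have "(T, \<sigma>, \<tau>, R - {(B, \<sigma>, \<tau>)}) \<in> ?D"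
      by simp
    moreover have "R = add_component M (T, \<sigma>, \<tau>, R - {(B, \<sigma>, \<tau>)})"
      using t B_eq by (auto simp: add_component_def)
    ultimately show "R \<in> add_component M ` ?D"
      by (rule rev_image_eqI)
  qed
  show "add_component M ` ?D \<subseteq> ?lhs"
    using riordan_complex_on_add_component[OF assms] by auto
qed

text \<open>The added component contains M, which lies outside the ground set of the remaining
  complex, so it can be read off again.\<close>
lemma inj_on_add_component:
  "inj_on (add_component M)
     (SIGMA T:{T. M \<notin> T}. UNIV \<times> UNIV \<times> {R. riordan_complex_on (S - insert M T) j R})"
proof (rule inj_onI, clarsimp)
  fix T \<sigma> \<tau> R T' \<sigma>' \<tau>' R'
  assume "M \<notin> T" "M \<notin> T'"
    and R: "riordan_complex_on (S - insert M T) j R" and R': "riordan_complex_on (S - insert M T') j R'"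
    and eq: "add_component M (T, \<sigma>, \<tau>, R) = add_component M (T', \<sigma>', \<tau>', R')"
  have notin: "(insert M T, \<sigma>, \<tau>) \<notin> R" "(insert M T, \<sigma>, \<tau>) \<notin> R'"
    using R R' by (auto dest: riordan_complex_on_block_subset)
  have ins: "insert (insert M T, \<sigma>, \<tau>) R = insert (insert M T', \<sigma>', \<tau>') R'"
    using eq by (simp add: add_component_def)
  then have same: "(insert M T, \<sigma>, \<tau>) = (insert M T', \<sigma>', \<tau>')"
    using notin(2) by blast
  then have "R = R'"
    using ins notin by (metis insert_ident)
  moreover have "T = T'"
    using same \<open>M \<notin> T\<close> \<open>M \<notin> T'\<close> by (metis Diff_insert_absorb prod.inject)
  ultimately show "T = T' \<and> \<sigma> = \<sigma>' \<and> \<tau> = \<tau>' \<and> R = R'"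
    using same by simp
qed

lemma card_riordan_complexes_on_Suc:
  assumes S: "finite S" "M = Max S" "S \<noteq> {}"
  shows "card {R. riordan_complex_on S (Suc j) R} =
    (\<Sum>T\<in>Pow (S - {M}). matchings (card T) ^ 2 * card {R. riordan_complex_on (S - insert M T) j R})"
proof -
  let ?X = "\<lambda>T. {R. riordan_complex_on (S - insert M T) j R}"
  let ?D = "SIGMA T:Pow (S - {M}). fpf_involutions T \<times> fpf_involutions T \<times> ?X T"
  have "inj_on (add_component M) ?D"
    by (rule inj_on_subset[OF inj_on_add_component]) auto
  then have "card {R. riordan_complex_on S (Suc j) R} = card ?D"
    unfolding riordan_complexes_on_Suc[OF S] by (rule card_image)
  also have "\<dots> = (\<Sum>T\<in>Pow (S - {M}). card (fpf_involutions T \<times> fpf_involutions T \<times> ?X T))"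
    using S(1) by (intro card_SigmaI)
      (auto intro!: finite_cartesian_product finite_fpf_involutions finite_riordan_complexes_on
        intro: finite_subset)
  also have "\<dots> = (\<Sum>T\<in>Pow (S - {M}). matchings (card T) ^ 2 * card (?X T))"
    using S(1) by (intro sum.cong) (auto simp: card_cartesian_product card_fpf_involutions
        power2_eq_square dest: finite_subset)
  finally show ?thesis .
qed

lemma sum_Pow_card:
  fixes h :: "nat \<Rightarrow> 'a::comm_semiring_1"
  assumes "finite A"
  shows "(\<Sum>T\<in>Pow A. h (card T)) = (\<Sum>r\<le>card A. of_nat (card A choose r) * h r)"
proof -
  have "(\<Sum>T\<in>Pow A. h (card T)) = (\<Sum>r\<le>card A. \<Sum>T\<in>{T. T \<in> Pow A \<and> card T = r}. h (card T))"
    by (rule sum.group[symmetric]) (use assms in \<open>auto intro: card_mono\<close>)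
  also have "\<dots> = (\<Sum>r\<le>card A. of_nat (card A choose r) * h r)"
  proof (rule sum.cong)
    fix r
    have "(\<Sum>T\<in>{T. T \<in> Pow A \<and> card T = r}. h (card T)) = (\<Sum>T\<in>{T. T \<subseteq> A \<and> card T = r}. h r)"
      by (rule sum.cong) auto
    then show "(\<Sum>T\<in>{T. T \<in> Pow A \<and> card T = r}. h (card T)) = of_nat (card A choose r) * h r"
      using n_subsets[OF assms, of r] by simp
  qed simp
  finally show ?thesis .
qed

definition matching_pairs :: "nat \<Rightarrow> rat" where
  "matching_pairs r = of_nat (matchings r) ^ 2"

text \<open>The recursion is that of card_riordan_complexes_on_Suc, grouped by r = card T.\<close>
fun complex_poly :: "nat \<Rightarrow> rat poly" where
  "complex_poly 0 = 1"
| "complex_poly (Suc N) =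
     [:0, 1:] * (\<Sum>r\<le>N. smult (of_nat (N choose r) * matching_pairs r) (complex_poly (N - r)))"

lemma card_riordan_complexes_on:
  assumes "finite S"
  shows "of_nat (card {R. riordan_complex_on S j R}) = coeff (complex_poly (card S)) j"
  using assms
proof (induction "card S" arbitrary: S j rule: less_induct)
  case less
  show ?case
  proof (cases "S = {}")
    case True
    then show ?thesis by (simp add: riordan_complexes_on_empty coeff_1)
  next
    case False
    define M where "M = Max S"
    define N where "N = card S - 1"
    have "M \<in> S"
      using False less.prems by (simp add: M_def)
    then have "card S > 0"
      using less.prems card_gt_0_iff by blast
    then have card_S: "card S = Suc N"
      by (simp add: N_def)
    show ?thesis
    proof (cases j)
      case 0
      then show ?thesis
        using False card_S by (simp add: riordan_complexes_on_0)
    next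
      case (Suc i)
      have IH: "of_nat (card {R. riordan_complex_on (S - insert M T) i R}) =
          coeff (complex_poly (N - card T)) i" if "T \<in> Pow (S - {M})" for T
      proof -
        have "finite T" "M \<notin> T" "insert M T \<subseteq> S"
          using that \<open>M \<in> S\<close> less.prems by (auto intro: finite_subset)
        then have "card (S - insert M T) = N - card T"
          using card_S by (simp add: card_Diff_subset)
        then show ?thesis
          using less.hyps[of "S - insert M T" i] less.prems card_S by simp
      qed
      have "of_nat (card {R. riordan_complex_on S j R}) =
          (\<Sum>T\<in>Pow (S - {M}). matching_pairs (card T) * coeff (complex_poly (N - card T)) i)"
        unfolding Suc card_riordan_complexes_on_Suc[OF less.prems M_def False]
        by (simp add: IH matching_pairs_def)
      also have "\<dots> = (\<Sum>r\<le>N. of_nat (N choose r) * (matching_pairs r * coeff (complex_poly (N - r)) i))"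
        using sum_Pow_card[of "S - {M}"] less.prems card_S \<open>M \<in> S\<close> by simp
      also have "\<dots> = coeff (complex_poly (card S)) j"
        unfolding card_S Suc by (simp add: coeff_sum algebra_simps)
      finally show ?thesis .
    qed
  qed
qed

definition egf :: "(nat \<Rightarrow> 'a::field_char_0) \<Rightarrow> 'a fps" where
  "egf a = Abs_fps (\<lambda>n. a n / fact n)"

lemma egf_nth [simp]: "egf a $ n = a n / fact n"
  by (simp add: egf_def)

lemma egf_eq_iff: "egf a = egf b \<longleftrightarrow> a = b"
  by (auto simp: fps_eq_iff fun_eq_iff)

lemma egf_add: "egf a + egf b = egf (\<lambda>n. a n + b n)"
  by (simp add: fps_eq_iff add_divide_distrib)

lemma fps_const_mult_egf: "fps_const c * egf a = egf (\<lambda>n. c * a n)"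
  by (simp add: fps_eq_iff)

lemma fps_deriv_egf: "fps_deriv (egf a) = egf (\<lambda>n. a (Suc n))"
  by (simp add: fps_eq_iff field_simps fact_Suc del: of_nat_Suc)

lemma fps_X_mult_egf: "fps_X * egf a = egf (\<lambda>n. of_nat n * a (n - 1))"
  by (simp add: fps_eq_iff) (auto simp: fact_reduce field_simps)

lemma egf_mult: "egf a * egf b = egf (\<lambda>n. \<Sum>r\<le>n. of_nat (n choose r) * a r * b (n - r))"
proof (rule fps_ext)
  fix n
  have "(\<Sum>r\<le>n. of_nat (n choose r) * a r * b (n - r)) / fact n =
      (\<Sum>r\<le>n. a r / fact r * (b (n - r) / fact (n - r)))"
    unfolding sum_divide_distrib by (intro sum.cong) (auto simp: binomial_fact field_simps)
  then show "(egf a * egf b) $ n = egf (\<lambda>n. \<Sum>r\<le>n. of_nat (n choose r) * a r * b (n - r)) $ n"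
    by (simp add: fps_mult_nth atLeast0AtMost)
qed

lemma matching_pairs_Suc: "matching_pairs (Suc n) = of_nat n ^ 2 * matching_pairs (n - 1)"
  by (cases n) (simp_all add: matching_pairs_def power2_eq_square algebra_simps)

lemma egf_matching_pairs_ode:
  "(1 - fps_X^2) * fps_deriv (egf matching_pairs) = fps_X * egf matching_pairs"
proof -
  have rec: "matching_pairs (Suc n) =
      of_nat n * (of_nat (n - 1) * matching_pairs (Suc (n - 1 - 1))) + of_nat n * matching_pairs (n - 1)"
    for n
    by (cases n; cases "n - 1") (simp_all add: matching_pairs_Suc power2_eq_square algebra_simps)
  have "fps_deriv (egf matching_pairs) =
      fps_X^2 * fps_deriv (egf matching_pairs) + fps_X * egf matching_pairs"
    unfolding power2_eq_square mult.assoc fps_deriv_egf fps_X_mult_egf egf_add egf_eq_iff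
    by (rule ext, rule rec)
  then show ?thesis
    by (simp add: algebra_simps)
qed

lemma egf_matching_pairs_square: "(1 - fps_X^2) * egf matching_pairs ^ 2 = 1"
proof -
  let ?G = "egf matching_pairs"
  have "fps_deriv ((1 - fps_X^2) * ?G^2) =
      2 * ?G * ((1 - fps_X^2) * fps_deriv ?G) - 2 * fps_X * ?G^2"
    by (simp add: power2_eq_square algebra_simps)
  also have "\<dots> = 0"
    unfolding egf_matching_pairs_ode by (simp add: power2_eq_square algebra_simps)
  finally have "fps_deriv ((1 - fps_X^2) * ?G^2) = 0" .
  moreover have "((1 - fps_X^2) * ?G^2) $ 0 = 1"
    by (simp add: power2_eq_square matching_pairs_def)
  ultimately show ?thesis
    by (metis fps_deriv_eq_0_iff fps_const_1_eq_1)
qed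

lemma fps_deriv_egf_complex_poly:
  "fps_deriv (egf (\<lambda>N. poly (complex_poly N) x)) =
     fps_const x * egf matching_pairs * egf (\<lambda>N. poly (complex_poly N) x)"
  unfolding fps_deriv_egf mult.assoc egf_mult fps_const_mult_egf egf_eq_iff
  by (simp add: fun_eq_iff poly_sum sum_distrib_left mult_ac)

text \<open>With F = egf (\<lambda>N. poly (complex_poly N) x) and G = egf matching_pairs we have F' = x G F,
  hence (1 - X^2) F'' = x ((1 - X^2) G') F + x^2 ((1 - X^2) G^2) F = X F' + x^2 F.\<close>
lemma poly_complex_poly_Suc_Suc:
  "poly (complex_poly (Suc (Suc n))) x = (x^2 + of_nat n ^ 2) * poly (complex_poly n) x"
proof -
  define p where "p N = poly (complex_poly N) x" for N
  define c where "c = fps_const x"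
  let ?F = "egf p" and ?G = "egf matching_pairs"
  have F': "fps_deriv ?F = c * ?G * ?F"
    unfolding p_def c_def by (rule fps_deriv_egf_complex_poly)
  have "fps_deriv c = 0"
    by (simp add: c_def)
  have "(1 - fps_X^2) * fps_deriv (fps_deriv ?F) =
      c * ((1 - fps_X^2) * fps_deriv ?G) * ?F + c * c * ((1 - fps_X^2) * ?G^2) * ?F"
    by (simp add: F' \<open>fps_deriv c = 0\<close> power2_eq_square algebra_simps)
  also have "\<dots> = fps_X * fps_deriv ?F + c * (c * ?F)"
    unfolding egf_matching_pairs_ode egf_matching_pairs_square F' by (simp add: mult_ac)
  finally have "fps_deriv (fps_deriv ?F) =
      fps_X * (fps_X * fps_deriv (fps_deriv ?F)) + fps_X * fps_deriv ?F + c * (c * ?F)"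
    by (simp add: power2_eq_square algebra_simps)
  then have "p (Suc (Suc n)) = of_nat n * (of_nat (n - 1) * p (Suc (Suc (n - 1 - 1))))
      + of_nat n * p (Suc (n - 1)) + x * (x * p n)"
    unfolding c_def fps_deriv_egf fps_X_mult_egf fps_const_mult_egf egf_add egf_eq_iff fun_eq_iff
    by blast
  then have "p (Suc (Suc n)) = (x^2 + of_nat n ^ 2) * p n"
    by (cases n; cases "n - 1") (simp_all add: power2_eq_square algebra_simps)
  then show ?thesis
    by (simp only: p_def)
qed

lemma complex_poly_Suc_Suc: "complex_poly (Suc (Suc n)) = [:of_nat n ^ 2, 0, 1:] * complex_poly n"
  by (rule poly_eq_poly_eq_iff[THEN iffD1])
    (simp add: fun_eq_iff poly_complex_poly_Suc_Suc algebra_simps power2_eq_square del: complex_poly.simps)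

definition odd_square_poly :: "nat \<Rightarrow> rat poly" where
  "odd_square_poly n = (\<Prod>j<n. [:of_nat (2*j+1) ^ 2, 0, 1:])"

definition half_odd_square_poly :: "nat \<Rightarrow> rat poly" where
  "half_odd_square_poly n = (\<Prod>j<n. [: - ((of_nat (2*j+1) / 2) ^ 2), 0, 1:])"

lemma complex_poly_odd: "complex_poly (2*n+1) = [:0, 1:] * odd_square_poly n"
proof (induction n)
  case 0
  then show ?case by (simp add: odd_square_poly_def matching_pairs_def)
next
  case (Suc n)
  have "complex_poly (2 * Suc n + 1) = [:of_nat (2*n+1) ^ 2, 0, 1:] * complex_poly (2*n+1)"
    using complex_poly_Suc_Suc[of "2*n+1"] by simp
  then show ?case
    unfolding Suc odd_square_poly_def by (simp add: mult_ac)
qed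

lemma prod_half_integer_shifts:
  "(\<Prod>l\<in>{- int n..int n - 1}. [:of_int l + 1/2, 1:]) = half_odd_square_poly n"
proof (induction n)
  case 0
  then show ?case by (simp add: half_odd_square_poly_def)
next
  case (Suc n)
  have "{- int (Suc n)..int (Suc n) - 1} = insert (- int n - 1) (insert (int n) {- int n..int n - 1})"
    by auto
  then have "(\<Prod>l\<in>{- int (Suc n)..int (Suc n) - 1}. [:of_int l + 1/2, 1:]) =
      [:of_int (- int n - 1) + 1/2, 1:] * ([:of_int (int n) + 1/2, 1:] * half_odd_square_poly n)"
    unfolding Suc.IH[symmetric] by (simp only:) (subst prod.insert; simp)+
  also have "\<dots> = [:of_int (- int n - 1) + 1/2, 1:] * [:of_int (int n) + 1/2, 1:] * half_odd_square_poly n"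
    by (simp only: mult.assoc)
  also have "[:of_int (- int n - 1) + 1/2, 1:] * [:of_int (int n) + 1/2, 1:] =
      [: - ((of_nat (2*n+1) / 2) ^ 2), 0, 1 :: rat:]"
    by (simp add: field_simps power2_eq_square)
  finally show ?case
    by (simp add: half_odd_square_poly_def mult_ac)
qed

text \<open>The factors of central_fact_poly (2n+1) after x are x + l + 1/2 for -n \<le> l < n; the ones for l
  and -l-1 pair up to x^2 - ((2l+1)/2)^2.\<close>
lemma central_fact_poly_odd: "central_fact_poly (2*n+1) = [:0, 1:] * half_odd_square_poly n"
proof -
  have "(\<Prod>i\<in>{1..2*n}. [:of_nat (2*n+1) / 2 - of_nat i, 1:]) =
      (\<Prod>l\<in>{- int n..int n - 1}. [:of_int l + 1/2, 1:] :: rat poly)"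
  proof (rule prod.reindex_bij_witness[where j = "\<lambda>i. int n - int i" and i = "\<lambda>l. nat (int n - l)"])
    fix i assume "i \<in> {1..2*n}"
    then show "nat (int n - (int n - int i)) = i" "int n - int i \<in> {- int n..int n - 1}"
      by auto
    show "[:of_int (int n - int i) + 1/2, 1:] = ([:of_nat (2*n+1) / 2 - of_nat i, 1:] :: rat poly)"
      by (simp add: field_simps)
  next
    fix l assume "l \<in> {- int n..int n - 1}"
    then show "int n - int (nat (int n - l)) = l" "nat (int n - l) \<in> {1..2*n}"
      by auto
  qed
  then show ?thesis
    by (simp add: central_fact_poly_def prod_half_integer_shifts)
qed

lemma coeff_quadratic_mult:
  fixes q :: "'a::comm_semiring_1 poly"
  shows "coeff ([:c, 0, 1:] * q) n = c * coeff q n + (if n < 2 then 0 else coeff q (n - 2))"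
  by (cases n; cases "n - 1") (simp_all add: coeff_pCons)

text \<open>Substituting 2ix for x: half_odd_square_poly n (x) = (-4)^(-n) odd_square_poly n (2ix).\<close>
lemma coeff_half_odd_square_poly:
  "(-4) ^ n * coeff (half_odd_square_poly n) (2*i) = (-4) ^ i * coeff (odd_square_poly n) (2*i)"
proof (induction n arbitrary: i)
  case 0
  then show ?case by (cases i) (simp_all add: half_odd_square_poly_def odd_square_poly_def coeff_1)
next
  case (Suc n)
  let ?a = "(of_nat (2*n+1) / 2) ^ 2 :: rat"
  have half: "half_odd_square_poly (Suc n) = [: - ?a, 0, 1:] * half_odd_square_poly n"
    by (simp add: half_odd_square_poly_def mult_ac)
  have odd: "odd_square_poly (Suc n) = [:4 * ?a, 0, 1:] * odd_square_poly n"
    by (simp add: odd_square_poly_def mult_ac power_divide)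
  show ?case
  proof (cases i)
    case 0
    then show ?thesis
      unfolding half odd coeff_quadratic_mult using Suc.IH[of 0] by (simp add: algebra_simps)
  next
    case (Suc k)
    then have "(-4) ^ Suc n * coeff (half_odd_square_poly (Suc n)) (2*i) =
        4 * ?a * ((-4) ^ n * coeff (half_odd_square_poly n) (2*i))
          - 4 * ((-4) ^ n * coeff (half_odd_square_poly n) (2*k))"
      unfolding half coeff_quadratic_mult by (simp add: algebra_simps)
    also have "\<dots> = (-4) ^ i * (4 * ?a * coeff (odd_square_poly n) (2*i) + coeff (odd_square_poly n) (2*k))"
      unfolding Suc.IH using Suc by (simp add: algebra_simps)
    also have "\<dots> = (-4) ^ i * coeff (odd_square_poly (Suc n)) (2*i)"
      unfolding odd coeff_quadratic_mult using Suc by simp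
    finally show ?thesis .
  qed
qed

lemma degree_odd_square_poly: "degree (odd_square_poly n) \<le> 2*n"
proof (induction n)
  case 0
  then show ?case by (simp add: odd_square_poly_def)
next
  case (Suc n)
  have "degree (odd_square_poly (Suc n)) \<le> degree [:of_nat (2*n+1) ^ 2, 0, 1 :: rat:] + degree (odd_square_poly n)"
    unfolding odd_square_poly_def prod.lessThan_Suc mult.commute[of _ "[:_, 0, 1:]"]
    by (rule degree_mult_le)
  with Suc show ?case
    by simp
qed

lemma vnum_eq_coeff_half_odd_square_poly:
  "vnum n k = 4 ^ (n - k) * coeff (half_odd_square_poly n) (2*k)"
  unfolding vnum_def cfact1_def central_fact_poly_odd by simp

lemma abs_vnum: "\<bar>vnum n k\<bar> = \<bar>coeff (odd_square_poly n) (2*k)\<bar>"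
proof (cases "k \<le> n")
  case True
  have "(-4 :: rat) ^ n = (-4) ^ k * (-4) ^ (n - k)"
    using True by (simp flip: power_add)
  then have "(-4) ^ k * ((-4) ^ (n - k) * coeff (half_odd_square_poly n) (2*k)) =
      (-4) ^ k * coeff (odd_square_poly n) (2*k)"
    using coeff_half_odd_square_poly[of n k] by (simp only: mult.assoc)
  then have "coeff (odd_square_poly n) (2*k) = (-4) ^ (n - k) * coeff (half_odd_square_poly n) (2*k)"
    by simp
  then show ?thesis
    unfolding vnum_eq_coeff_half_odd_square_poly by (simp add: abs_mult power_abs)
next
  case False
  then have "coeff (odd_square_poly n) (2*k) = 0"
    using degree_odd_square_poly[of n] by (intro coeff_eq_0) simp
  moreover from this have "coeff (half_odd_square_poly n) (2*k) = 0"
    using coeff_half_odd_square_poly[of n k] by simp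
  ultimately show ?thesis
    by (simp add: vnum_eq_coeff_half_odd_square_poly)
qed

lemma card_riordan_complexes:
  "of_nat (card {R. riordan_complex n k R}) = coeff (odd_square_poly n) (2*k)"
proof -
  have "of_nat (card {R. riordan_complex n k R}) = coeff (complex_poly (card {1..2*n+1})) (2*k+1)"
    unfolding riordan_complex_eq_on by (rule card_riordan_complexes_on) simp
  also have "card {1..2*n+1} = 2*n+1"
    by simp
  also have "coeff (complex_poly (2*n+1)) (2*k+1) = coeff (odd_square_poly n) (2*k)"
    unfolding complex_poly_odd by simp
  finally show ?thesis .
qed

theorem theorem19:
  fixes n k :: nat
  shows "\<bar>vnum n k\<bar> = of_nat (card {R. riordan_complex n k R})"
  by (simp add: abs_vnum flip: card_riordan_complexes)

end
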